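(* Let $\delta>0$, $t\in(0,1]$, and let $c>0$ be a fixed constant. There is a constant $C$ (depending only on $c$) such that for all positive integers $m,n$ with $n\ge2$ and $\max\{m/n,n/m\}\le c$, $$\mathrm{GW}(\mathcal{M}^{\mathrm{nbr}}(m,n,\delta,t)) \leq C\big(\delta(\log n)^2 + t\big).$$
   Context: $\mathcal{M}^{\mathrm{nbr}}(m,n,\delta,t) = \{\theta\in\mathbb{R}^{m\times n}: \mathrm{TV}(\theta)\le\delta,\ \|\theta\|\le t\}$, where $\mathrm{TV}$ is the unnormalized total variation (sum of absolute differences over horizontally/vertically adjacent entries) and $\|\cdot\|$ the Frobenius norm. $\mathrm{GW}(A) = \mathbb{E}\sup_{v\in A}\langle Z,v\rangle$ with $Z$ an $m\times n$ matrix of i.i.d. standard normals. *)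

theory Defs
  imports "HOL-Probability.Probability"
begin

text \<open>An m x n real matrix is represented as a function on index pairs
  (i,j) with i < m, j < n (0-based), vanishing outside this index set.\<close>

definition idx :: "nat \<Rightarrow> nat \<Rightarrow> (nat \<times> nat) set" where
  "idx m n = {..<m} \<times> {..<n}"

definition is_matrix :: "nat \<Rightarrow> nat \<Rightarrow> (nat \<times> nat \<Rightarrow> real) \<Rightarrow> bool" where
  "is_matrix m n \<theta> \<longleftrightarrow> (\<forall>p. p \<notin> idx m n \<longrightarrow> \<theta> p = 0)"

text \<open>Unnormalized (anisotropic) total variation: sum of absolute differences
  over horizontally and vertically adjacent entries.\<close>
definition TV :: "nat \<Rightarrow> nat \<Rightarrow> (nat \<times> nat \<Rightarrow> real) \<Rightarrow> real" where
  "TV m n \<theta> =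
     (\<Sum>i<m. \<Sum>j\<in>{j. j + 1 < n}. \<bar>\<theta> (i, j + 1) - \<theta> (i, j)\<bar>)
   + (\<Sum>i\<in>{i. i + 1 < m}. \<Sum>j<n. \<bar>\<theta> (i + 1, j) - \<theta> (i, j)\<bar>)"

definition frob :: "nat \<Rightarrow> nat \<Rightarrow> (nat \<times> nat \<Rightarrow> real) \<Rightarrow> real" where
  "frob m n \<theta> = sqrt (\<Sum>p\<in>idx m n. (\<theta> p)\<^sup>2)"

definition minner :: "nat \<Rightarrow> nat \<Rightarrow> (nat \<times> nat \<Rightarrow> real) \<Rightarrow> (nat \<times> nat \<Rightarrow> real) \<Rightarrow> real" where
  "minner m n Z v = (\<Sum>p\<in>idx m n. Z p * v p)"

definition M_nbr :: "nat \<Rightarrow> nat \<Rightarrow> real \<Rightarrow> real \<Rightarrow> (nat \<times> nat \<Rightarrow> real) set" where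
  "M_nbr m n \<delta> t = {\<theta>. is_matrix m n \<theta> \<and> TV m n \<theta> \<le> \<delta> \<and> frob m n \<theta> \<le> t}"

definition gauss_mat :: "nat \<Rightarrow> nat \<Rightarrow> (nat \<times> nat \<Rightarrow> real) measure" where
  "gauss_mat m n = PiM (idx m n) (\<lambda>_. std_normal_distribution)"

definition GW :: "nat \<Rightarrow> nat \<Rightarrow> (nat \<times> nat \<Rightarrow> real) set \<Rightarrow> real" where
  "GW m n A = (\<integral>Z. (SUP v\<in>A. minner m n Z v) \<partial>gauss_mat m n)"

end

theory Submission
  imports Defs "HOL-Analysis.Harmonic_Numbers"
begin

(* Chaining over dyadic block partitions of the m x n grid.  Let \<theta>_k be \<theta> averaged over each of
   the 4^k blocks of the k-th dyadic partition.  Once 2^K >= max m n the blocks are single cells, so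
     <Z, \<theta>> = <Z, \<theta>_0> + (\<Sum>k<K. <Z, \<theta>_(k+1) - \<theta>_k>).
   The first term is at most t |g| for a standard normal g, by Cauchy-Schwarz.  On each block B of
   level k+1 the increment \<theta>_(k+1) - \<theta>_k is constant, and a discrete Poincare inequality bounds it
   by the total variation of \<theta> on the parent block divided by the side length of B.  As m/n is
   bounded the blocks are roughly square, so the k-th term is at most C \<delta> max_B |g_B|, where g_B is
   the normalized Gaussian sum over B.  The expected maximum of these 4^(k+1) standard normals is
   O(k) by exponential moments, and K = O(log n). *)

section \<open>Gaussian sums\<close>

lemma std_normal_mgf:
  fixes a :: real
  shows "integrable std_normal_distribution (\<lambda>x. exp (a * x))"
    and "(\<integral>x. exp (a * x) \<partial>std_normal_distribution) = exp (a\<^sup>2 / 2)"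
proof -
  have density: "std_normal_density x * exp (a * x) = exp (a\<^sup>2 / 2) * normal_density a 1 x" for x
    by (simp add: normal_density_def mult_exp_exp power2_eq_square field_simps flip: exp_add)
  then show "integrable std_normal_distribution (\<lambda>x. exp (a * x))"
    by (subst integrable_density) auto
  have "(\<integral>x. exp (a * x) \<partial>std_normal_distribution)
      = (\<integral>x. std_normal_density x *\<^sub>R exp (a * x) \<partial>lborel)"
    by (subst integral_density) auto
  also have "\<dots> = exp (a\<^sup>2 / 2)"
    using density by simp
  finally show "(\<integral>x. exp (a * x) \<partial>std_normal_distribution) = exp (a\<^sup>2 / 2)" .
qed

abbreviation iid_normal :: "'i set \<Rightarrow> ('i \<Rightarrow> real) measure" where
  "iid_normal I \<equiv> PiM I (\<lambda>_. std_normal_distribution)"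

lemma prob_space_iid_normal: "prob_space (iid_normal I)"
  by (rule prob_space_PiM) (auto intro: prob_space_normal_density)

lemma borel_measurable_sum_coordinates:
  assumes "B \<subseteq> I"
  shows "(\<lambda>Z. \<Sum>p\<in>B. Z p) \<in> borel_measurable (iid_normal I)"
proof (rule borel_measurable_sum)
  fix p assume "p \<in> B"
  then have "(\<lambda>Z. Z p) \<in> measurable (iid_normal I) std_normal_distribution"
    using assms by (intro measurable_component_singleton) auto
  then show "(\<lambda>Z. Z p) \<in> borel_measurable (iid_normal I)"
    by (simp cong: measurable_cong_sets)
qed

lemma iid_normal_sum_mgf:
  assumes "finite I" "B \<subseteq> I"
  shows "integrable (iid_normal I) (\<lambda>Z. exp (a * (\<Sum>p\<in>B. Z p)))"
    and "(\<integral>Z. exp (a * (\<Sum>p\<in>B. Z p)) \<partial>iid_normal I) = exp (a\<^sup>2 * real (card B) / 2)"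
proof -
  interpret product_sigma_finite "\<lambda>_::'i. std_normal_distribution"
    unfolding product_sigma_finite_def
    by (auto intro!: prob_space_imp_sigma_finite prob_space_normal_density)
  interpret std: prob_space std_normal_distribution
    by (auto intro: prob_space_normal_density)
  define f where "f p = (if p \<in> B then (\<lambda>x. exp (a * x)) else (\<lambda>_. 1))" for p
  have f_apply: "f p x = (if p \<in> B then exp (a * x) else 1)" for p x
    by (simp add: f_def)
  have f_integrable: "integrable std_normal_distribution (f p)" for p
    using std_normal_mgf(1)[of a] by (cases "p \<in> B") (auto simp: f_def)
  have f_integral: "integral\<^sup>L std_normal_distribution (f p) = (if p \<in> B then exp (a\<^sup>2 / 2) else 1)" for p
    by (cases "p \<in> B") (simp_all add: f_def std_normal_mgf(2) std.prob_space[simplified])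
  have prod_f: "(\<Prod>p\<in>I. f p (Z p)) = exp (a * (\<Sum>p\<in>B. Z p))" for Z
    using assms by (simp add: f_apply prod.If_cases Int_absorb1 exp_sum finite_subset sum_distrib_left)
  show "integrable (iid_normal I) (\<lambda>Z. exp (a * (\<Sum>p\<in>B. Z p)))"
    using product_integrable_prod[where f=f, OF assms(1) f_integrable] prod_f by simp
  have "(\<integral>Z. exp (a * (\<Sum>p\<in>B. Z p)) \<partial>iid_normal I)
      = (\<Prod>p\<in>I. integral\<^sup>L std_normal_distribution (f p))"
    using product_integral_prod[where f=f, OF assms(1) f_integrable] prod_f by simp
  also have "\<dots> = exp (a\<^sup>2 / 2) ^ card B"
    using assms by (simp add: f_integral prod.If_cases Int_absorb1)
  also have "\<dots> = exp (a\<^sup>2 * real (card B) / 2)"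
    by (simp flip: exp_of_nat_mult)
  finally show "(\<integral>Z. exp (a * (\<Sum>p\<in>B. Z p)) \<partial>iid_normal I) = exp (a\<^sup>2 * real (card B) / 2)" .
qed

definition normalized_sum :: "'i set \<Rightarrow> ('i \<Rightarrow> real) \<Rightarrow> real" where
  "normalized_sum B Z = (\<Sum>p\<in>B. Z p) / sqrt (real (card B))"

lemma exp_half_le_2: "exp (1 / 2 :: real) \<le> 2"
proof (rule power2_le_imp_le)
  have "(exp (1 / 2 :: real))\<^sup>2 = exp 1"
    by (simp flip: exp_of_nat_mult)
  also have "\<dots> \<le> 2\<^sup>2"
    using exp_le by simp
  finally show "(exp (1 / 2 :: real))\<^sup>2 \<le> 2\<^sup>2" .
qed simp

lemma integral_exp_abs_normalized_sum_le:
  assumes "finite I" "B \<subseteq> I"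
  shows "integrable (iid_normal I) (\<lambda>Z. exp \<bar>normalized_sum B Z\<bar>)"
    and "(\<integral>Z. exp \<bar>normalized_sum B Z\<bar> \<partial>iid_normal I) \<le> 4"
proof -
  define a where "a = 1 / sqrt (real (card B))"
  define g where "g Z = exp (a * (\<Sum>p\<in>B. Z p)) + exp (- a * (\<Sum>p\<in>B. Z p))" for Z
  have exp_abs_le: "exp \<bar>normalized_sum B Z\<bar> \<le> g Z" for Z
    by (cases "normalized_sum B Z \<ge> 0")
      (auto simp: g_def normalized_sum_def a_def add_increasing add_increasing2)
  have g_nonneg: "g Z \<ge> 0" for Z
    by (simp add: g_def)
  have g_integrable: "integrable (iid_normal I) g"
    unfolding g_def by (intro Bochner_Integration.integrable_add iid_normal_sum_mgf(1)[OF assms])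
  have mgf_a: "exp (a\<^sup>2 * real (card B) / 2) \<le> exp (1 / 2)"
    by (cases "card B = 0") (auto simp: a_def power_divide)
  show integrable: "integrable (iid_normal I) (\<lambda>Z. exp \<bar>normalized_sum B Z\<bar>)"
    using borel_measurable_sum_coordinates[OF assms(2)] exp_abs_le g_nonneg
    by (intro Bochner_Integration.integrable_bound[OF g_integrable])
      (auto simp: normalized_sum_def[abs_def])
  have "(\<integral>Z. exp \<bar>normalized_sum B Z\<bar> \<partial>iid_normal I) \<le> integral\<^sup>L (iid_normal I) g"
    by (rule integral_mono[OF integrable g_integrable exp_abs_le])
  also have "\<dots> = 2 * exp (a\<^sup>2 * real (card B) / 2)"
    unfolding g_def using iid_normal_sum_mgf[OF assms, of a] iid_normal_sum_mgf[OF assms, of "- a"]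
    by simp
  also have "\<dots> \<le> 4"
    using mgf_a exp_half_le_2 by linarith
  finally show "(\<integral>Z. exp \<bar>normalized_sum B Z\<bar> \<partial>iid_normal I) \<le> 4" .
qed

lemma integral_excess_normalized_sum_le:
  assumes "finite I" "B \<subseteq> I"
  shows "integrable (iid_normal I) (\<lambda>Z. max (\<bar>normalized_sum B Z\<bar> - s) 0)"
    and "(\<integral>Z. max (\<bar>normalized_sum B Z\<bar> - s) 0 \<partial>iid_normal I) \<le> 4 * exp (- s)"
proof -
  have excess_le: "max (\<bar>normalized_sum B Z\<bar> - s) 0 \<le> exp (- s) * exp \<bar>normalized_sum B Z\<bar>" for Z
    by (simp add: mult_exp_exp) (use exp_ge_add_one_self[of "\<bar>normalized_sum B Z\<bar> - s"] in linarith)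
  have bound_integrable: "integrable (iid_normal I) (\<lambda>Z. exp (- s) * exp \<bar>normalized_sum B Z\<bar>)"
    using integral_exp_abs_normalized_sum_le(1)[OF assms] by simp
  show integrable: "integrable (iid_normal I) (\<lambda>Z. max (\<bar>normalized_sum B Z\<bar> - s) 0)"
    using borel_measurable_sum_coordinates[OF assms(2)] excess_le
    by (intro Bochner_Integration.integrable_bound[OF bound_integrable])
      (auto simp: normalized_sum_def[abs_def])
  have "(\<integral>Z. max (\<bar>normalized_sum B Z\<bar> - s) 0 \<partial>iid_normal I)
      \<le> (\<integral>Z. exp (- s) * exp \<bar>normalized_sum B Z\<bar> \<partial>iid_normal I)"
    by (rule integral_mono[OF integrable bound_integrable excess_le])
  also have "\<dots> \<le> exp (- s) * 4"
    using integral_exp_abs_normalized_sum_le(2)[OF assms] by simp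
  finally show "(\<integral>Z. max (\<bar>normalized_sum B Z\<bar> - s) 0 \<partial>iid_normal I) \<le> 4 * exp (- s)"
    by (simp add: mult.commute)
qed

definition soft_max :: "real \<Rightarrow> ('a \<Rightarrow> real) \<Rightarrow> 'a set \<Rightarrow> real" where
  "soft_max s f A = s + (\<Sum>x\<in>A. max (f x - s) 0)"

lemma le_soft_max:
  assumes "finite A" "x \<in> A"
  shows "f x \<le> soft_max s f A"
proof -
  have "max (f x - s) 0 \<le> (\<Sum>y\<in>A. max (f y - s) 0)"
    using assms by (intro member_le_sum) auto
  then show ?thesis
    by (simp add: soft_max_def)
qed

lemma soft_max_nonneg: "s \<ge> 0 \<Longrightarrow> soft_max s f A \<ge> 0"
  by (simp add: soft_max_def sum_nonneg)

text \<open>\<open>soft_max s\<close> dominates the maximum, and \<open>|A|\<close> standard normals exceed the level \<open>s\<close> by only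
  \<open>4 |A| e\<^sup>-\<^sup>s\<close> in expectation; \<open>s = ln |A|\<close> gives the usual \<open>O(log |A|)\<close> bound on the expected maximum.\<close>
lemma integral_soft_max_normalized_sums_le:
  assumes "finite I" "finite A" "\<And>x. x \<in> A \<Longrightarrow> B x \<subseteq> I"
  shows "integrable (iid_normal I) (\<lambda>Z. soft_max s (\<lambda>x. \<bar>normalized_sum (B x) Z\<bar>) A)"
    and "(\<integral>Z. soft_max s (\<lambda>x. \<bar>normalized_sum (B x) Z\<bar>) A \<partial>iid_normal I)
           \<le> s + real (card A) * (4 * exp (- s))"
proof -
  interpret prob_space "iid_normal I"
    by (rule prob_space_iid_normal)
  show "integrable (iid_normal I) (\<lambda>Z. soft_max s (\<lambda>x. \<bar>normalized_sum (B x) Z\<bar>) A)"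
    unfolding soft_max_def using integral_excess_normalized_sum_le(1)[OF assms(1,3)] by auto
  have "(\<integral>Z. soft_max s (\<lambda>x. \<bar>normalized_sum (B x) Z\<bar>) A \<partial>iid_normal I)
      = s + (\<Sum>x\<in>A. \<integral>Z. max (\<bar>normalized_sum (B x) Z\<bar> - s) 0 \<partial>iid_normal I)"
    unfolding soft_max_def using integral_excess_normalized_sum_le(1)[OF assms(1,3)]
    by (simp add: Bochner_Integration.integral_sum prob_space)
  also have "\<dots> \<le> s + (\<Sum>x\<in>A. 4 * exp (- s))"
    using integral_excess_normalized_sum_le(2)[OF assms(1,3)] by (intro add_left_mono sum_mono) auto
  finally show "(\<integral>Z. soft_max s (\<lambda>x. \<bar>normalized_sum (B x) Z\<bar>) A \<partial>iid_normal I)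
      \<le> s + real (card A) * (4 * exp (- s))"
    by simp
qed

section \<open>Dyadic partitions\<close>

lemma sum_lessThan_double:
  fixes h :: "nat \<Rightarrow> 'a::comm_monoid_add"
  shows "(\<Sum>i<2 * N. h i) = (\<Sum>a<N. h (2 * a) + h (Suc (2 * a)))"
  by (induction N) (simp_all add: add.assoc)

lemma sum_lessThan_double_div_2:
  fixes h :: "nat \<Rightarrow> 'a::comm_semiring_1"
  shows "(\<Sum>a<2 * N. h (a div 2)) = 2 * (\<Sum>a<N. h a)"
  by (induction N) (simp_all add: algebra_simps mult_2_right)

lemma sum_dyadic_parents:
  fixes h :: "nat \<Rightarrow> nat \<Rightarrow> 'a::comm_semiring_1"
  shows "(\<Sum>a<2 ^ Suc k. \<Sum>b<2 ^ Suc k. h (a div 2) (b div 2)) = 4 * (\<Sum>a<2 ^ k. \<Sum>b<2 ^ k. h a b)"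
proof -
  have "(\<Sum>a<2 ^ Suc k. \<Sum>b<2 ^ Suc k. h (a div 2) (b div 2))
      = (\<Sum>a<2 * 2 ^ k. 2 * (\<Sum>b<2 ^ k. h (a div 2) b))"
    by (simp add: sum_lessThan_double_div_2)
  also have "\<dots> = 2 * (\<Sum>a<2 ^ k. 2 * (\<Sum>b<2 ^ k. h a b))"
    by (rule sum_lessThan_double_div_2)
  finally show ?thesis
    by (simp add: sum_distrib_left mult.assoc)
qed

lemma sum_consecutive_intervals:
  assumes "mono (f :: nat \<Rightarrow> nat)"
  shows "(\<Sum>a<N. sum g {f a..<f (Suc a)}) = sum g {f 0..<f N}"
proof (induction N)
  case (Suc N)
  have "f 0 \<le> f N" "f N \<le> f (Suc N)"
    using assms by (simp_all add: monoD)
  with Suc show ?case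
    by (simp add: sum.atLeastLessThan_concat)
qed simp

text \<open>The \<open>k\<close>-th dyadic partition of \<open>{..<m}\<close> into the \<open>2\<^sup>k\<close> intervals \<open>dyadic_interval m k a\<close>,
  \<open>a < 2\<^sup>k\<close>, of length about \<open>m / 2\<^sup>k\<close>; when \<open>2\<^sup>k > m\<close> some of them are empty.\<close>
definition dyadic_cut :: "nat \<Rightarrow> nat \<Rightarrow> nat \<Rightarrow> nat" where
  "dyadic_cut m k a = a * m div 2 ^ k"

definition dyadic_interval :: "nat \<Rightarrow> nat \<Rightarrow> nat \<Rightarrow> nat set" where
  "dyadic_interval m k a = {dyadic_cut m k a..<dyadic_cut m k (Suc a)}"

lemma mono_dyadic_cut: "mono (dyadic_cut m k)"
  unfolding dyadic_cut_def by (intro monoI div_le_mono mult_le_mono1)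

lemma dyadic_cut_double: "dyadic_cut m (Suc k) (2 * a) = dyadic_cut m k a"
  unfolding dyadic_cut_def by (simp add: mult.assoc div_mult_mult1)

lemma finite_dyadic_interval [simp]: "finite (dyadic_interval m k a)"
  by (simp add: dyadic_interval_def)

lemma sum_dyadic_intervals: "(\<Sum>a<2 ^ k. sum g (dyadic_interval m k a)) = sum g {..<m}"
  using sum_consecutive_intervals[OF mono_dyadic_cut[of m k], where N = "2 ^ k" and g = g]
  by (simp add: dyadic_interval_def dyadic_cut_def atLeast0LessThan)

lemma dyadic_interval_subset: "a < 2 ^ k \<Longrightarrow> dyadic_interval m k a \<subseteq> {..<m}"
  using monoD[OF mono_dyadic_cut[of m k], of "Suc a" "2 ^ k"]
  by (auto simp: dyadic_interval_def dyadic_cut_def)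

lemma dyadic_interval_Suc_subset:
  "dyadic_interval m (Suc k) a \<subseteq> dyadic_interval m k (a div 2)"
proof -
  have "dyadic_cut m k (a div 2) \<le> dyadic_cut m (Suc k) a"
    using monoD[OF mono_dyadic_cut[of m "Suc k"], of "2 * (a div 2)" a]
    by (simp add: dyadic_cut_double)
  moreover have "dyadic_cut m (Suc k) (Suc a) \<le> dyadic_cut m (Suc k) (2 * Suc (a div 2))"
    by (rule monoD[OF mono_dyadic_cut]) simp
  then have "dyadic_cut m (Suc k) (Suc a) \<le> dyadic_cut m k (Suc (a div 2))"
    by (simp only: dyadic_cut_double)
  ultimately show ?thesis
    by (auto simp: dyadic_interval_def)
qed

lemma sum_dyadic_interval_split:
  "sum g (dyadic_interval m k a)
     = sum g (dyadic_interval m (Suc k) (2 * a)) + sum g (dyadic_interval m (Suc k) (Suc (2 * a)))"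
proof -
  have "dyadic_cut m (Suc k) (Suc (Suc (2 * a))) = dyadic_cut m k (Suc a)"
    using dyadic_cut_double[of m k "Suc a"] by simp
  moreover have "dyadic_cut m (Suc k) (2 * a) \<le> dyadic_cut m (Suc k) (Suc (2 * a))"
    "dyadic_cut m (Suc k) (Suc (2 * a)) \<le> dyadic_cut m (Suc k) (Suc (Suc (2 * a)))"
    by (simp_all add: monoD[OF mono_dyadic_cut])
  ultimately show ?thesis
    by (simp add: dyadic_interval_def dyadic_cut_double sum.atLeastLessThan_concat)
qed

lemma sum_dyadic_refine:
  "(\<Sum>a<2 ^ k. \<Sum>i\<in>dyadic_interval m k a. h a i)
     = (\<Sum>a<2 ^ Suc k. \<Sum>i\<in>dyadic_interval m (Suc k) a. h (a div 2) i)"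
  by (simp add: sum_lessThan_double flip: sum_dyadic_interval_split)

lemma real_of_nat_div_bounds:
  assumes "d > 0"
  shows "real (x div d) \<le> real x / real d" and "real x / real d < real (x div d) + 1"
proof -
  have floor: "real (x div d) = of_int \<lfloor>real x / real d\<rfloor>"
    by (simp add: floor_divide_of_nat_eq)
  show "real (x div d) \<le> real x / real d" "real x / real d < real (x div d) + 1"
    unfolding floor by linarith+
qed

lemma card_dyadic_interval_bounds:
  "real m / 2 ^ k - 1 < real (card (dyadic_interval m k a))"
  "real (card (dyadic_interval m k a)) < real m / 2 ^ k + 1"
proof -
  have "real (card (dyadic_interval m k a)) = real (Suc a * m div 2 ^ k) - real (a * m div 2 ^ k)"
    using monoD[OF mono_dyadic_cut[of m k], of a "Suc a"]
    by (simp add: dyadic_interval_def dyadic_cut_def of_nat_diff)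
  moreover have "real (Suc a * m) / 2 ^ k = real (a * m) / 2 ^ k + real m / 2 ^ k"
    by (simp add: field_simps)
  moreover note real_of_nat_div_bounds[of "2 ^ k" "Suc a * m"] real_of_nat_div_bounds[of "2 ^ k" "a * m"]
  ultimately show "real m / 2 ^ k - 1 < real (card (dyadic_interval m k a))"
    "real (card (dyadic_interval m k a)) < real m / 2 ^ k + 1"
    by simp_all
qed

lemma card_dyadic_interval_le_1:
  assumes "m \<le> 2 ^ k"
  shows "card (dyadic_interval m k a) \<le> 1"
proof -
  have "real m / 2 ^ k \<le> 1"
    using assms by (simp add: divide_le_eq)
  then show ?thesis
    using card_dyadic_interval_bounds(2)[of m k a] by linarith
qed

text \<open>The nonemptiness hypothesis absorbs the rounding of the interval lengths.\<close>
lemma card_dyadic_interval_ratio: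
  assumes "c \<ge> 0" "real n \<le> c * real m" "dyadic_interval m k a \<noteq> {}"
  shows "real (card (dyadic_interval n k b)) \<le> (2 * c + 1) * real (card (dyadic_interval m k a))"
proof -
  define x where "x = real m / 2 ^ k"
  define h where "h = real (card (dyadic_interval m k a))"
  have h: "h \<ge> 1" "h > x - 1"
    using assms(3) card_dyadic_interval_bounds(1)[of m k a]
    by (auto simp: h_def x_def Suc_leI card_gt_0_iff)
  have "real n / 2 ^ k \<le> c * x"
    using assms(2) by (simp add: x_def divide_right_mono)
  then have "real (card (dyadic_interval n k b)) < c * x + 1"
    using card_dyadic_interval_bounds(2)[of n k b] by linarith
  moreover have "c * x \<le> c * (2 * h)"
    using h assms(1) by (cases "x \<ge> 2") (auto intro: mult_left_mono)
  ultimately show ?thesis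
    using h assms(1) by (simp add: h_def algebra_simps)
qed

section \<open>A discrete Poincare inequality\<close>

definition mean_on :: "('a \<Rightarrow> real) \<Rightarrow> 'a set \<Rightarrow> real" where
  "mean_on f X = sum f X / real (card X)"

lemma abs_mean_on_diff_le:
  assumes "finite B" "B \<noteq> {}" "finite Q" "Q \<noteq> {}"
    and "\<And>b q. b \<in> B \<Longrightarrow> q \<in> Q \<Longrightarrow> \<bar>f b - f q\<bar> \<le> u b + v q"
  shows "\<bar>mean_on f B - mean_on f Q\<bar> \<le> mean_on u B + mean_on v Q"
proof -
  define N where "N = real (card B) * real (card Q)"
  have cards: "real (card B) > 0" "real (card Q) > 0"
    using assms(1-4) by (simp_all add: card_gt_0_iff)
  then have N: "N > 0"
    by (simp add: N_def)
  have "(\<Sum>b\<in>B. \<Sum>q\<in>Q. f b - f q) = real (card Q) * sum f B - real (card B) * sum f Q"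
    by (simp add: sum_subtractf sum_distrib_left)
  moreover have "mean_on f B - mean_on f Q = (real (card Q) * sum f B - real (card B) * sum f Q) / N"
    using cards by (simp add: mean_on_def N_def field_simps)
  ultimately have "mean_on f B - mean_on f Q = (\<Sum>b\<in>B. \<Sum>q\<in>Q. f b - f q) / N"
    by simp
  then have "\<bar>mean_on f B - mean_on f Q\<bar> \<le> (\<Sum>b\<in>B. \<Sum>q\<in>Q. \<bar>f b - f q\<bar>) / N"
    using N by (simp add: abs_divide divide_right_mono order_trans[OF sum_abs sum_mono[OF sum_abs]])
  also have "\<dots> \<le> (\<Sum>b\<in>B. \<Sum>q\<in>Q. u b + v q) / N"
    using N assms(5) by (intro divide_right_mono sum_mono) auto
  also have "(\<Sum>b\<in>B. \<Sum>q\<in>Q. u b + v q) = real (card Q) * sum u B + real (card B) * sum v Q"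
    by (simp add: sum.distrib sum_distrib_left)
  also have "(real (card Q) * sum u B + real (card B) * sum v Q) / N = mean_on u B + mean_on v Q"
    using cards by (simp add: mean_on_def N_def field_simps)
  finally show ?thesis .
qed

definition TV_rows :: "(nat \<times> nat \<Rightarrow> real) \<Rightarrow> nat set \<Rightarrow> nat set \<Rightarrow> real" where
  "TV_rows \<theta> R C = (\<Sum>i\<in>R. \<Sum>j\<in>{j\<in>C. Suc j \<in> C}. \<bar>\<theta> (i, Suc j) - \<theta> (i, j)\<bar>)"

definition TV_cols :: "(nat \<times> nat \<Rightarrow> real) \<Rightarrow> nat set \<Rightarrow> nat set \<Rightarrow> real" where
  "TV_cols \<theta> R C = (\<Sum>j\<in>C. \<Sum>i\<in>{i\<in>R. Suc i \<in> R}. \<bar>\<theta> (Suc i, j) - \<theta> (i, j)\<bar>)"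

definition TV_rect :: "(nat \<times> nat \<Rightarrow> real) \<Rightarrow> nat set \<Rightarrow> nat set \<Rightarrow> real" where
  "TV_rect \<theta> R C = TV_rows \<theta> R C + TV_cols \<theta> R C"

lemma TV_rows_nonneg: "TV_rows \<theta> R C \<ge> 0"
  unfolding TV_rows_def by (intro sum_nonneg) auto

lemma TV_cols_nonneg: "TV_cols \<theta> R C \<ge> 0"
  unfolding TV_cols_def by (intro sum_nonneg) auto

lemma TV_rect_nonneg: "TV_rect \<theta> R C \<ge> 0"
  by (simp add: TV_rect_def TV_rows_nonneg TV_cols_nonneg)

lemma TV_eq_TV_rect: "TV m n \<theta> = TV_rect \<theta> {..<m} {..<n}"
proof -
  have "{j. j + 1 < n} = {j \<in> {..<n}. Suc j \<in> {..<n}}" "{i. i + 1 < m} = {i \<in> {..<m}. Suc i \<in> {..<m}}"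
    by auto
  then show ?thesis
    unfolding TV_def TV_rect_def TV_rows_def TV_cols_def by (simp add: sum.swap[of _ "{..<n}"])
qed

lemma abs_diff_le_sum_increments:
  fixes f :: "nat \<Rightarrow> real"
  assumes "j \<le> j'"
  shows "\<bar>f j' - f j\<bar> \<le> (\<Sum>l\<in>{j..<j'}. \<bar>f (Suc l) - f l\<bar>)"
  using assms
proof (induction j' rule: dec_induct)
  case (step l)
  have "\<bar>f (Suc l) - f j\<bar> \<le> \<bar>f (Suc l) - f l\<bar> + \<bar>f l - f j\<bar>"
    by linarith
  with step show ?case
    by simp
qed simp

lemma abs_diff_le_interval_variation:
  fixes f :: "nat \<Rightarrow> real"
  assumes "j \<in> {x..<y}" "j' \<in> {x..<y}"
  shows "\<bar>f j - f j'\<bar> \<le> (\<Sum>l\<in>{l\<in>{x..<y}. Suc l \<in> {x..<y}}. \<bar>f (Suc l) - f l\<bar>)"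
proof -
  have ordered: "\<bar>f v - f u\<bar> \<le> (\<Sum>l\<in>{l\<in>{x..<y}. Suc l \<in> {x..<y}}. \<bar>f (Suc l) - f l\<bar>)"
    if "u \<le> v" "u \<in> {x..<y}" "v \<in> {x..<y}" for u v
  proof -
    have "\<bar>f v - f u\<bar> \<le> (\<Sum>l\<in>{u..<v}. \<bar>f (Suc l) - f l\<bar>)"
      by (rule abs_diff_le_sum_increments[OF that(1)])
    also have "\<dots> \<le> (\<Sum>l\<in>{l\<in>{x..<y}. Suc l \<in> {x..<y}}. \<bar>f (Suc l) - f l\<bar>)"
      using that by (intro sum_mono2) auto
    finally show ?thesis .
  qed
  show ?thesis
  proof (cases "j \<le> j'")
    case True
    then show ?thesis
      using ordered[of j j'] assms by (simp add: abs_minus_commute)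
  next
    case False
    then show ?thesis
      using ordered[of j' j] assms by simp
  qed
qed

text \<open>A discrete Poincare inequality: pass from \<open>(i, j)\<close> to \<open>(i, j')\<close> along a row and then
  to \<open>(i', j')\<close> along a column, and average over \<open>(i, j) \<in> R' \<times> C'\<close> and \<open>(i', j') \<in> R \<times> C\<close>.\<close>
lemma abs_mean_on_subrectangle_diff_le:
  assumes R: "R = {x1..<y1}" and C: "C = {x2..<y2}" and sub: "R' \<subseteq> R" "C' \<subseteq> C"
    and ne: "R' \<noteq> {}" "C' \<noteq> {}"
  shows "\<bar>mean_on \<theta> (R' \<times> C') - mean_on \<theta> (R \<times> C)\<bar>
           \<le> TV_rows \<theta> R C / real (card R') + TV_cols \<theta> R C / real (card C)"
proof -
  define H where "H i = (\<Sum>j\<in>{j\<in>C. Suc j \<in> C}. \<bar>\<theta> (i, Suc j) - \<theta> (i, j)\<bar>)" for i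
  define V where "V j = (\<Sum>i\<in>{i\<in>R. Suc i \<in> R}. \<bar>\<theta> (Suc i, j) - \<theta> (i, j)\<bar>)" for j
  have fin: "finite R" "finite C" "finite R'" "finite C'"
    using R C sub finite_subset by auto
  have path: "\<bar>\<theta> b - \<theta> q\<bar> \<le> H (fst b) + V (snd q)" if "b \<in> R' \<times> C'" "q \<in> R \<times> C" for b q
  proof -
    obtain i j i' j' where b: "b = (i, j)" and q: "q = (i', j')"
      by force
    have "\<bar>\<theta> (i, j) - \<theta> (i, j')\<bar> \<le> H i"
      unfolding H_def using abs_diff_le_interval_variation[of j x2 y2 j' "\<lambda>l. \<theta> (i, l)"] that sub C b q
      by auto
    moreover have "\<bar>\<theta> (i, j') - \<theta> (i', j')\<bar> \<le> V j'"
      unfolding V_def using abs_diff_le_interval_variation[of i x1 y1 i' "\<lambda>l. \<theta> (l, j')"] that sub R b q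
      by auto
    ultimately show ?thesis
      by (simp add: b q)
  qed
  have "\<bar>mean_on \<theta> (R' \<times> C') - mean_on \<theta> (R \<times> C)\<bar>
      \<le> mean_on (\<lambda>b. H (fst b)) (R' \<times> C') + mean_on (\<lambda>q. V (snd q)) (R \<times> C)"
    using fin ne sub path by (intro abs_mean_on_diff_le) auto
  also have "mean_on (\<lambda>b. H (fst b)) (R' \<times> C') = sum H R' / real (card R')"
    using fin ne by (simp add: mean_on_def sum.cartesian_product' card_cartesian_product flip: sum_distrib_left)
  also have "mean_on (\<lambda>q. V (snd q)) (R \<times> C) = TV_cols \<theta> R C / real (card C)"
    using fin ne sub
    by (simp add: mean_on_def sum.cartesian_product' card_cartesian_product TV_cols_def V_def
        sum.swap[of _ R] flip: sum_distrib_left)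
  also have "sum H R' \<le> TV_rows \<theta> R C"
    unfolding TV_rows_def H_def[symmetric] using fin sub by (intro sum_mono2) (auto simp: H_def)
  finally show ?thesis
    by (simp add: divide_right_mono)
qed

lemma sqrt_mult_le_of_ratio:
  fixes h w L :: real
  assumes "0 \<le> h" "w \<le> L * h" "1 \<le> L"
  shows "sqrt (h * w) \<le> L * h"
proof (rule real_le_lsqrt)
  have "L \<le> L * L"
    using assms(3) mult_right_mono[of 1 L L] by simp
  then have "h * (L * h) \<le> (L * L) * (h * h)"
    using assms(1) mult_right_mono[of L "L * L" "h * h"] by (simp add: mult_ac)
  then show "h * w \<le> (L * h)\<^sup>2"
    using mult_left_mono[OF assms(2,1)] by (simp add: power2_eq_square mult_ac)
qed (use assms in auto)

text \<open>For aspect ratio at most \<open>L\<close>, the factor \<open>sqrt |R' \<times> C'|\<close> from normalizing the Gaussian sum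
  cancels the denominators of the Poincare inequality up to \<open>L\<close>.\<close>
lemma abs_sum_mult_mean_increment_le:
  assumes R: "R = {x1..<y1}" and C: "C = {x2..<y2}" and sub: "R' \<subseteq> R" "C' \<subseteq> C"
    and ne: "R' \<noteq> {}" "C' \<noteq> {}" and L: "1 \<le> L"
    and ratio: "real (card C') \<le> L * real (card R')" "real (card R') \<le> L * real (card C')"
  shows "\<bar>sum Z (R' \<times> C') * (mean_on \<theta> (R' \<times> C') - mean_on \<theta> (R \<times> C))\<bar>
           \<le> \<bar>normalized_sum (R' \<times> C') Z\<bar> * L * TV_rect \<theta> R C"
proof -
  define h w where "h = real (card R')" and "w = real (card C')"
  have fin: "finite R'" "finite C'"
    using sub R C finite_subset by auto
  have pos: "h > 0" "w > 0"
    using fin ne by (simp_all add: h_def w_def card_gt_0_iff)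
  have w_le: "w \<le> real (card C)"
    using card_mono[of C C'] sub(2) C by (simp add: w_def)
  have row_factor: "sqrt (h * w) / h \<le> L"
    using sqrt_mult_le_of_ratio[of h w L] pos ratio L by (simp add: h_def w_def divide_le_eq)
  have "sqrt (h * w) \<le> L * w"
    using sqrt_mult_le_of_ratio[of w h L] pos ratio L by (simp add: h_def w_def mult.commute)
  also have "\<dots> \<le> L * real (card C)"
    using w_le L by (intro mult_left_mono) auto
  finally have col_factor: "sqrt (h * w) / real (card C) \<le> L"
    using pos w_le by (simp add: divide_le_eq)
  have "sqrt (h * w) * \<bar>mean_on \<theta> (R' \<times> C') - mean_on \<theta> (R \<times> C)\<bar>
      \<le> sqrt (h * w) * (TV_rows \<theta> R C / h + TV_cols \<theta> R C / real (card C))"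
    using abs_mean_on_subrectangle_diff_le[OF R C sub ne, of \<theta>] pos
    by (intro mult_left_mono) (simp_all add: h_def)
  then have poincare: "sqrt (h * w) * \<bar>mean_on \<theta> (R' \<times> C') - mean_on \<theta> (R \<times> C)\<bar>
      \<le> sqrt (h * w) / h * TV_rows \<theta> R C + sqrt (h * w) / real (card C) * TV_cols \<theta> R C"
    by (simp add: distrib_left)
  have "sum Z (R' \<times> C') = normalized_sum (R' \<times> C') Z * sqrt (h * w)"
    using pos by (simp add: normalized_sum_def h_def w_def card_cartesian_product)
  then have "\<bar>sum Z (R' \<times> C') * (mean_on \<theta> (R' \<times> C') - mean_on \<theta> (R \<times> C))\<bar>
      = \<bar>normalized_sum (R' \<times> C') Z\<bar> * (sqrt (h * w) * \<bar>mean_on \<theta> (R' \<times> C') - mean_on \<theta> (R \<times> C)\<bar>)"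
    using pos by (simp add: abs_mult)
  also have "\<dots> \<le> \<bar>normalized_sum (R' \<times> C') Z\<bar>
      * (sqrt (h * w) / h * TV_rows \<theta> R C + sqrt (h * w) / real (card C) * TV_cols \<theta> R C)"
    using poincare by (intro mult_left_mono) auto
  also have "\<dots> \<le> \<bar>normalized_sum (R' \<times> C') Z\<bar> * (L * TV_rows \<theta> R C + L * TV_cols \<theta> R C)"
    using row_factor col_factor TV_rows_nonneg TV_cols_nonneg
    by (intro mult_left_mono add_mono mult_right_mono) auto
  finally show ?thesis
    by (simp add: TV_rect_def algebra_simps)
qed

section \<open>Chaining\<close>

definition dyadic_block :: "nat \<Rightarrow> nat \<Rightarrow> nat \<Rightarrow> nat \<Rightarrow> nat \<Rightarrow> (nat \<times> nat) set" where
  "dyadic_block m n k a b = dyadic_interval m k a \<times> dyadic_interval n k b"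

lemma finite_dyadic_block [simp]: "finite (dyadic_block m n k a b)"
  by (simp add: dyadic_block_def)

lemma finite_idx [simp]: "finite (idx m n)"
  by (simp add: idx_def)

lemma dyadic_block_subset_idx: "a < 2 ^ k \<Longrightarrow> b < 2 ^ k \<Longrightarrow> dyadic_block m n k a b \<subseteq> idx m n"
  using dyadic_interval_subset by (auto simp: dyadic_block_def idx_def)

lemma dyadic_child_increment_le:
  assumes "c \<ge> 1" "real m \<le> c * real n" "real n \<le> c * real m"
  shows "\<bar>sum Z (dyadic_block m n (Suc k) a b)
            * (mean_on \<theta> (dyadic_block m n (Suc k) a b) - mean_on \<theta> (dyadic_block m n k (a div 2) (b div 2)))\<bar>
         \<le> \<bar>normalized_sum (dyadic_block m n (Suc k) a b) Z\<bar> * (2 * c + 1)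
            * TV_rect \<theta> (dyadic_interval m k (a div 2)) (dyadic_interval n k (b div 2))"
proof (cases "dyadic_interval m (Suc k) a = {} \<or> dyadic_interval n (Suc k) b = {}")
  case True
  then show ?thesis
    using assms(1) TV_rect_nonneg by (auto simp: dyadic_block_def)
next
  case False
  then show ?thesis
    unfolding dyadic_block_def
    using assms card_dyadic_interval_ratio[of c n m "Suc k" a b] card_dyadic_interval_ratio[of c m n "Suc k" b a]
    by (intro abs_sum_mult_mean_increment_le[OF dyadic_interval_def dyadic_interval_def
          dyadic_interval_Suc_subset dyadic_interval_Suc_subset]) auto
qed

lemma sum_dyadic_blocks_refine:
  "(\<Sum>a<2 ^ k. \<Sum>b<2 ^ k. \<Sum>p\<in>dyadic_block m n k a b. h a b p)
     = (\<Sum>a<2 ^ Suc k. \<Sum>b<2 ^ Suc k. \<Sum>p\<in>dyadic_block m n (Suc k) a b. h (a div 2) (b div 2) p)"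
proof -
  have "(\<Sum>a<2 ^ k. \<Sum>b<2 ^ k. \<Sum>p\<in>dyadic_block m n k a b. h a b p)
      = (\<Sum>a<2 ^ k. \<Sum>i\<in>dyadic_interval m k a. \<Sum>b<2 ^ k. \<Sum>j\<in>dyadic_interval n k b. h a b (i, j))"
    unfolding dyadic_block_def sum.cartesian_product' by (rule sum.cong[OF refl], rule sum.swap)
  also have "\<dots> = (\<Sum>a<2 ^ k. \<Sum>i\<in>dyadic_interval m k a.
      \<Sum>b<2 ^ Suc k. \<Sum>j\<in>dyadic_interval n (Suc k) b. h a (b div 2) (i, j))"
    by (intro sum.cong refl sum_dyadic_refine)
  also have "\<dots> = (\<Sum>a<2 ^ Suc k. \<Sum>i\<in>dyadic_interval m (Suc k) a.
      \<Sum>b<2 ^ Suc k. \<Sum>j\<in>dyadic_interval n (Suc k) b. h (a div 2) (b div 2) (i, j))"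
    by (rule sum_dyadic_refine)
  also have "\<dots> = (\<Sum>a<2 ^ Suc k. \<Sum>b<2 ^ Suc k. \<Sum>p\<in>dyadic_block m n (Suc k) a b. h (a div 2) (b div 2) p)"
    unfolding dyadic_block_def sum.cartesian_product' by (rule sum.cong[OF refl], rule sum.swap)
  finally show ?thesis .
qed

text \<open>\<open>level_inner m n \<theta> Z k = \<langle>Z, \<theta>\<^sub>k\<rangle>\<close>, where \<open>\<theta>\<^sub>k\<close> is \<open>\<theta>\<close> averaged over each dyadic block
  of level \<open>k\<close>.\<close>
definition level_inner :: "nat \<Rightarrow> nat \<Rightarrow> (nat \<times> nat \<Rightarrow> real) \<Rightarrow> (nat \<times> nat \<Rightarrow> real) \<Rightarrow> nat \<Rightarrow> real"
  where "level_inner m n \<theta> Z k =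
    (\<Sum>a<2 ^ k. \<Sum>b<2 ^ k. sum Z (dyadic_block m n k a b) * mean_on \<theta> (dyadic_block m n k a b))"

lemma level_inner_0: "level_inner m n \<theta> Z 0 = sum Z (idx m n) * mean_on \<theta> (idx m n)"
  by (simp add: level_inner_def dyadic_block_def dyadic_interval_def dyadic_cut_def idx_def
      atLeast0LessThan)

lemma level_inner_finest:
  assumes "m \<le> 2 ^ K" "n \<le> 2 ^ K"
  shows "level_inner m n \<theta> Z K = minner m n Z \<theta>"
proof -
  have singleton: "sum Z B * mean_on \<theta> B = (\<Sum>p\<in>B. Z p * \<theta> p)" if "finite B" "card B \<le> 1" for B
  proof -
    have "B = {} \<or> (\<exists>p. B = {p})"
      using that by (auto simp: le_Suc_eq card_Suc_eq)
    then show ?thesis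
      by (auto simp: mean_on_def)
  qed
  have "card (dyadic_block m n K a b) \<le> 1" for a b
    using mult_le_mono[OF card_dyadic_interval_le_1 card_dyadic_interval_le_1, OF assms]
    by (simp add: dyadic_block_def card_cartesian_product)
  then have "level_inner m n \<theta> Z K = (\<Sum>a<2 ^ K. \<Sum>b<2 ^ K. \<Sum>p\<in>dyadic_block m n K a b. Z p * \<theta> p)"
    by (simp add: level_inner_def singleton)
  also have "\<dots> = (\<Sum>a<2 ^ K. \<Sum>b<2 ^ K. \<Sum>i\<in>dyadic_interval m K a. \<Sum>j\<in>dyadic_interval n K b.
      Z (i, j) * \<theta> (i, j))"
    by (simp add: dyadic_block_def sum.cartesian_product')
  also have "\<dots> = (\<Sum>a<2 ^ K. \<Sum>i\<in>dyadic_interval m K a. \<Sum>b<2 ^ K. \<Sum>j\<in>dyadic_interval n K b.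
      Z (i, j) * \<theta> (i, j))"
    by (rule sum.cong[OF refl], rule sum.swap)
  also have "\<dots> = minner m n Z \<theta>"
    by (simp add: sum_dyadic_intervals minner_def idx_def sum.cartesian_product')
  finally show ?thesis .
qed

lemma level_inner_Suc_diff:
  "level_inner m n \<theta> Z (Suc k) - level_inner m n \<theta> Z k
     = (\<Sum>a<2 ^ Suc k. \<Sum>b<2 ^ Suc k. sum Z (dyadic_block m n (Suc k) a b)
          * (mean_on \<theta> (dyadic_block m n (Suc k) a b) - mean_on \<theta> (dyadic_block m n k (a div 2) (b div 2))))"
proof -
  have "level_inner m n \<theta> Z k
      = (\<Sum>a<2 ^ k. \<Sum>b<2 ^ k. \<Sum>p\<in>dyadic_block m n k a b. Z p * mean_on \<theta> (dyadic_block m n k a b))"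
    by (simp add: level_inner_def sum_distrib_right)
  also have "\<dots> = (\<Sum>a<2 ^ Suc k. \<Sum>b<2 ^ Suc k. \<Sum>p\<in>dyadic_block m n (Suc k) a b.
      Z p * mean_on \<theta> (dyadic_block m n k (a div 2) (b div 2)))"
    by (rule sum_dyadic_blocks_refine)
  finally show ?thesis
    by (simp add: level_inner_def sum_subtractf right_diff_distrib flip: sum_distrib_right)
qed

lemma sum_adjacent_in_dyadic_intervals_le:
  fixes g :: "nat \<Rightarrow> real"
  assumes "\<And>j. g j \<ge> 0"
  shows "(\<Sum>b<2 ^ k. \<Sum>j\<in>{j\<in>dyadic_interval n k b. Suc j \<in> dyadic_interval n k b}. g j)
           \<le> (\<Sum>j\<in>{j\<in>{..<n}. Suc j \<in> {..<n}}. g j)"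
proof -
  define g' where "g' j = (if Suc j \<in> {..<n} then g j else 0)" for j
  have "(\<Sum>j\<in>{j\<in>dyadic_interval n k b. Suc j \<in> dyadic_interval n k b}. g j)
      \<le> sum g' (dyadic_interval n k b)" if "b < 2 ^ k" for b
  proof -
    have "(\<Sum>j\<in>{j\<in>dyadic_interval n k b. Suc j \<in> dyadic_interval n k b}. g j)
        = (\<Sum>j\<in>{j\<in>dyadic_interval n k b. Suc j \<in> dyadic_interval n k b}. g' j)"
      using dyadic_interval_subset[OF that] by (intro sum.cong) (auto simp: g'_def)
    also have "\<dots> \<le> sum g' (dyadic_interval n k b)"
      using assms by (intro sum_mono2) (auto simp: g'_def)
    finally show ?thesis .
  qed
  then have "(\<Sum>b<2 ^ k. \<Sum>j\<in>{j\<in>dyadic_interval n k b. Suc j \<in> dyadic_interval n k b}. g j)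
      \<le> (\<Sum>b<2 ^ k. sum g' (dyadic_interval n k b))"
    by (intro sum_mono) auto
  also have "\<dots> = sum g' {..<n}"
    by (rule sum_dyadic_intervals)
  also have "\<dots> = (\<Sum>j\<in>{j\<in>{..<n}. Suc j \<in> {..<n}}. g j)"
    unfolding g'_def by (rule sum.inter_filter[symmetric]) simp
  finally show ?thesis .
qed

lemma sum_TV_rows_dyadic_le:
  "(\<Sum>a<2 ^ k. \<Sum>b<2 ^ k. TV_rows \<theta> (dyadic_interval m k a) (dyadic_interval n k b))
     \<le> TV_rows \<theta> {..<m} {..<n}"
proof -
  have "(\<Sum>a<2 ^ k. \<Sum>b<2 ^ k. TV_rows \<theta> (dyadic_interval m k a) (dyadic_interval n k b))
      = (\<Sum>a<2 ^ k. \<Sum>i\<in>dyadic_interval m k a. \<Sum>b<2 ^ k.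
           \<Sum>j\<in>{j\<in>dyadic_interval n k b. Suc j \<in> dyadic_interval n k b}. \<bar>\<theta> (i, Suc j) - \<theta> (i, j)\<bar>)"
    unfolding TV_rows_def by (rule sum.cong[OF refl], rule sum.swap)
  also have "\<dots> \<le> (\<Sum>a<2 ^ k. \<Sum>i\<in>dyadic_interval m k a.
      \<Sum>j\<in>{j\<in>{..<n}. Suc j \<in> {..<n}}. \<bar>\<theta> (i, Suc j) - \<theta> (i, j)\<bar>)"
    by (intro sum_mono sum_adjacent_in_dyadic_intervals_le) simp
  also have "\<dots> = TV_rows \<theta> {..<m} {..<n}"
    by (simp add: sum_dyadic_intervals TV_rows_def)
  finally show ?thesis .
qed

lemma sum_TV_cols_dyadic_le:
  "(\<Sum>a<2 ^ k. \<Sum>b<2 ^ k. TV_cols \<theta> (dyadic_interval m k a) (dyadic_interval n k b))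
     \<le> TV_cols \<theta> {..<m} {..<n}"
proof -
  have "(\<Sum>a<2 ^ k. \<Sum>b<2 ^ k. TV_cols \<theta> (dyadic_interval m k a) (dyadic_interval n k b))
      = (\<Sum>b<2 ^ k. \<Sum>j\<in>dyadic_interval n k b. \<Sum>a<2 ^ k.
           \<Sum>i\<in>{i\<in>dyadic_interval m k a. Suc i \<in> dyadic_interval m k a}. \<bar>\<theta> (Suc i, j) - \<theta> (i, j)\<bar>)"
    unfolding TV_cols_def by (subst sum.swap) (rule sum.cong[OF refl], rule sum.swap)
  also have "\<dots> \<le> (\<Sum>b<2 ^ k. \<Sum>j\<in>dyadic_interval n k b.
      \<Sum>i\<in>{i\<in>{..<m}. Suc i \<in> {..<m}}. \<bar>\<theta> (Suc i, j) - \<theta> (i, j)\<bar>)"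
    by (intro sum_mono sum_adjacent_in_dyadic_intervals_le) simp
  also have "\<dots> = TV_cols \<theta> {..<m} {..<n}"
    by (simp add: sum_dyadic_intervals TV_cols_def)
  finally show ?thesis .
qed

lemma sum_TV_rect_dyadic_le:
  "(\<Sum>a<2 ^ k. \<Sum>b<2 ^ k. TV_rect \<theta> (dyadic_interval m k a) (dyadic_interval n k b)) \<le> TV m n \<theta>"
proof -
  have "(\<Sum>a<2 ^ k. \<Sum>b<2 ^ k. TV_rect \<theta> (dyadic_interval m k a) (dyadic_interval n k b))
      = (\<Sum>a<2 ^ k. \<Sum>b<2 ^ k. TV_rows \<theta> (dyadic_interval m k a) (dyadic_interval n k b))
        + (\<Sum>a<2 ^ k. \<Sum>b<2 ^ k. TV_cols \<theta> (dyadic_interval m k a) (dyadic_interval n k b))"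
    unfolding TV_rect_def by (simp only: sum.distrib)
  also have "\<dots> \<le> TV_rows \<theta> {..<m} {..<n} + TV_cols \<theta> {..<m} {..<n}"
    using sum_TV_rows_dyadic_le sum_TV_cols_dyadic_le by (rule add_mono)
  also have "\<dots> = TV m n \<theta>"
    by (simp only: TV_eq_TV_rect TV_rect_def)
  finally show ?thesis .
qed

lemma sum_mult_mean_on_le:
  assumes "finite X"
  shows "sum Z X * mean_on \<theta> X \<le> L2_set \<theta> X * \<bar>normalized_sum X Z\<bar>"
proof (cases "X = {}")
  case False
  define N where "N = real (card X)"
  have N: "N > 0"
    using assms False by (simp add: N_def card_gt_0_iff)
  have "\<bar>sum \<theta> X\<bar> \<le> (\<Sum>i\<in>X. \<bar>1\<bar> * \<bar>\<theta> i\<bar>)"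
    by (simp add: sum_abs)
  also have "\<dots> \<le> L2_set (\<lambda>_. 1) X * L2_set \<theta> X"
    by (rule L2_set_mult_ineq)
  finally have cauchy_schwarz: "\<bar>sum \<theta> X\<bar> \<le> sqrt N * L2_set \<theta> X"
    by (simp add: L2_set_def N_def)
  have "sum Z X * mean_on \<theta> X = normalized_sum X Z * (sum \<theta> X / sqrt N)"
    using N by (simp add: normalized_sum_def mean_on_def N_def field_simps)
  also have "\<dots> \<le> \<bar>normalized_sum X Z * (sum \<theta> X / sqrt N)\<bar>"
    by (rule abs_ge_self)
  also have "\<dots> = \<bar>normalized_sum X Z\<bar> * (\<bar>sum \<theta> X\<bar> / sqrt N)"
    using N by (simp add: abs_mult abs_divide)
  also have "\<dots> \<le> \<bar>normalized_sum X Z\<bar> * L2_set \<theta> X"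
    using cauchy_schwarz N by (intro mult_left_mono) (simp_all add: divide_le_eq mult.commute)
  finally show ?thesis
    by (simp add: mult.commute)
qed simp

definition dyadic_soft_max :: "nat \<Rightarrow> nat \<Rightarrow> nat \<Rightarrow> real \<Rightarrow> (nat \<times> nat \<Rightarrow> real) \<Rightarrow> real" where
  "dyadic_soft_max m n k s Z =
     soft_max s (\<lambda>(a, b). \<bar>normalized_sum (dyadic_block m n k a b) Z\<bar>) ({..<2 ^ k} \<times> {..<2 ^ k})"

lemma dyadic_soft_max_nonneg: "s \<ge> 0 \<Longrightarrow> dyadic_soft_max m n k s Z \<ge> 0"
  by (simp add: dyadic_soft_max_def soft_max_nonneg)

lemma level_inner_Suc_diff_le:
  assumes "c \<ge> 1" "real m \<le> c * real n" "real n \<le> c * real m" "TV m n \<theta> \<le> \<delta>" "s \<ge> 0"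
  shows "level_inner m n \<theta> Z (Suc k) - level_inner m n \<theta> Z k
           \<le> 4 * (2 * c + 1) * \<delta> * dyadic_soft_max m n (Suc k) s Z"
proof -
  define F where "F = dyadic_soft_max m n (Suc k) s Z"
  define T where "T a b = (2 * c + 1) * TV_rect \<theta> (dyadic_interval m k a) (dyadic_interval n k b)" for a b
  have T_nonneg: "T a b \<ge> 0" for a b
    using assms(1) TV_rect_nonneg by (simp add: T_def)
  have child: "sum Z (dyadic_block m n (Suc k) a b)
        * (mean_on \<theta> (dyadic_block m n (Suc k) a b) - mean_on \<theta> (dyadic_block m n k (a div 2) (b div 2)))
      \<le> F * T (a div 2) (b div 2)" (is "?increment \<le> _") if "a < 2 ^ Suc k" "b < 2 ^ Suc k" for a b
  proof -
    have "\<bar>normalized_sum (dyadic_block m n (Suc k) a b) Z\<bar> \<le> F"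
      using le_soft_max[of "{..<2 ^ Suc k} \<times> {..<2 ^ Suc k}" "(a, b)"
          "\<lambda>(a, b). \<bar>normalized_sum (dyadic_block m n (Suc k) a b) Z\<bar>" s] that
      by (simp add: F_def dyadic_soft_max_def)
    have "?increment \<le> \<bar>?increment\<bar>"
      by (rule abs_ge_self)
    also have "\<dots> \<le> \<bar>normalized_sum (dyadic_block m n (Suc k) a b) Z\<bar> * T (a div 2) (b div 2)"
      using dyadic_child_increment_le[OF assms(1-3), where Z = Z and k = k and a = a and b = b and \<theta> = \<theta>]
      by (simp add: T_def mult.assoc)
    also have "\<dots> \<le> F * T (a div 2) (b div 2)"
      using \<open>\<bar>normalized_sum (dyadic_block m n (Suc k) a b) Z\<bar> \<le> F\<close> T_nonneg by (rule mult_right_mono)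
    finally show ?thesis .
  qed
  have "level_inner m n \<theta> Z (Suc k) - level_inner m n \<theta> Z k
      \<le> (\<Sum>a<2 ^ Suc k. \<Sum>b<2 ^ Suc k. F * T (a div 2) (b div 2))"
    unfolding level_inner_Suc_diff using child by (intro sum_mono) auto
  also have "\<dots> = 4 * F * (\<Sum>a<2 ^ k. \<Sum>b<2 ^ k. T a b)"
    using sum_dyadic_parents[of "\<lambda>a b. F * T a b" k] by (simp add: sum_distrib_left mult.assoc)
  also have "\<dots> \<le> 4 * F * ((2 * c + 1) * \<delta>)"
    using sum_TV_rect_dyadic_le[where k = k and \<theta> = \<theta> and m = m and n = n] assms(1,4,5) dyadic_soft_max_nonneg
    by (intro mult_left_mono) (auto simp: T_def F_def simp flip: sum_distrib_left)
  finally show ?thesis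
    by (simp add: F_def algebra_simps)
qed

lemma minner_le_chaining_bound:
  assumes "c \<ge> 1" "real m \<le> c * real n" "real n \<le> c * real m" "m \<le> 2 ^ K" "n \<le> 2 ^ K"
    and "\<theta> \<in> M_nbr m n \<delta> t" and "\<And>k. s k \<ge> 0"
  shows "minner m n Z \<theta>
           \<le> t * \<bar>normalized_sum (idx m n) Z\<bar>
             + 4 * (2 * c + 1) * \<delta> * (\<Sum>k<K. dyadic_soft_max m n (Suc k) (s k) Z)"
proof -
  have TV: "TV m n \<theta> \<le> \<delta>" and L2: "L2_set \<theta> (idx m n) \<le> t"
    using assms(6) by (auto simp: M_nbr_def frob_def L2_set_def)
  have "minner m n Z \<theta> = level_inner m n \<theta> Z 0 + (\<Sum>k<K. level_inner m n \<theta> Z (Suc k) - level_inner m n \<theta> Z k)"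
    by (simp add: sum_lessThan_telescope level_inner_finest assms(4,5))
  also have "\<dots> \<le> t * \<bar>normalized_sum (idx m n) Z\<bar>
      + (\<Sum>k<K. 4 * (2 * c + 1) * \<delta> * dyadic_soft_max m n (Suc k) (s k) Z)"
  proof (rule add_mono)
    show "level_inner m n \<theta> Z 0 \<le> t * \<bar>normalized_sum (idx m n) Z\<bar>"
      using sum_mult_mean_on_le[of "idx m n" Z \<theta>] L2 mult_right_mono[OF L2, of "\<bar>normalized_sum (idx m n) Z\<bar>"]
      by (simp add: level_inner_0 idx_def)
  qed (intro sum_mono level_inner_Suc_diff_le[OF assms(1-3) TV assms(7)])
  finally show ?thesis
    by (simp add: sum_distrib_left)
qed

text \<open>Level \<open>k\<close> has \<open>4\<^sup>k\<close> blocks; the threshold \<open>s = ln 4\<^sup>k\<close> makes the excess part of the soft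
  maximum contribute only the constant \<open>4\<close>.\<close>
lemma integral_dyadic_soft_max_le:
  shows "integrable (gauss_mat m n) (dyadic_soft_max m n k (real k * ln 4))"
    and "(\<integral>Z. dyadic_soft_max m n k (real k * ln 4) Z \<partial>gauss_mat m n) \<le> 2 * real k + 4"
proof -
  define A where "A = ({..<2 ^ k} \<times> {..<2 ^ k} :: (nat \<times> nat) set)"
  have blocks: "x \<in> A \<Longrightarrow> case_prod (dyadic_block m n k) x \<subseteq> idx m n" for x
    by (cases x) (simp add: A_def dyadic_block_subset_idx)
  have eq: "dyadic_soft_max m n k s = (\<lambda>Z. soft_max s (\<lambda>x. \<bar>normalized_sum (case_prod (dyadic_block m n k) x) Z\<bar>) A)"
    for s
    by (rule ext) (simp add: dyadic_soft_max_def A_def case_prod_unfold)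
  have "finite A"
    by (simp add: A_def)
  note soft = integral_soft_max_normalized_sums_le[where I = "idx m n" and A = A
      and B = "case_prod (dyadic_block m n k)" and s = "real k * ln 4", OF finite_idx this blocks]
  show "integrable (gauss_mat m n) (dyadic_soft_max m n k (real k * ln 4))"
    using soft(1) by (simp add: eq gauss_mat_def A_def)
  have "real (card A) * (4 * exp (- (real k * ln 4))) = 4"
    by (simp add: A_def card_cartesian_product exp_minus exp_of_nat_mult power_mult_distrib[symmetric])
  moreover have "ln (4 :: real) \<le> 2"
    using ln_realpow[of 2 2] ln_2_less_1 by simp
  then have "real k * ln 4 \<le> 2 * real k"
    by (simp add: mult_left_mono mult.commute)
  ultimately show "(\<integral>Z. dyadic_soft_max m n k (real k * ln 4) Z \<partial>gauss_mat m n) \<le> 2 * real k + 4"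
    using soft(2) by (simp add: eq gauss_mat_def A_def)
qed

text \<open>The Bochner integral of a non-integrable supremum is \<open>0\<close>, hence the hypothesis \<open>0 \<le> \<beta>\<close>.\<close>
lemma GW_le:
  assumes "A \<noteq> {}" "\<And>Z v. v \<in> A \<Longrightarrow> minner m n Z v \<le> F Z"
    and "integrable (gauss_mat m n) F" "integral\<^sup>L (gauss_mat m n) F \<le> \<beta>" "0 \<le> \<beta>"
  shows "GW m n A \<le> \<beta>"
proof (cases "integrable (gauss_mat m n) (\<lambda>Z. SUP v\<in>A. minner m n Z v)")
  case True
  have "GW m n A \<le> integral\<^sup>L (gauss_mat m n) F"
    unfolding GW_def using assms(1,2) by (intro integral_mono[OF True assms(3)] cSUP_least) auto
  with assms(4) show ?thesis
    by linarith
next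
  case False
  with assms(5) show ?thesis
    by (simp add: GW_def not_integrable_integral_eq)
qed

lemma GW_M_nbr_le_dyadic_depth:
  assumes "c \<ge> 1" "real m \<le> c * real n" "real n \<le> c * real m" "m \<le> 2 ^ K" "n \<le> 2 ^ K"
    and "\<delta> \<ge> 0" "t \<ge> 0"
  shows "GW m n (M_nbr m n \<delta> t) \<le> 4 * t + 4 * (2 * c + 1) * \<delta> * (real K * (2 * real K + 4))"
proof -
  interpret prob_space "gauss_mat m n"
    unfolding gauss_mat_def by (rule prob_space_iid_normal)
  define s where "s k = real (Suc k) * ln 4" for k
  define soft where "soft k = dyadic_soft_max m n (Suc k) (s k)" for k
  define F where "F Z = t * \<bar>normalized_sum (idx m n) Z\<bar> + 4 * (2 * c + 1) * \<delta> * (\<Sum>k<K. soft k Z)" for Z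
  have abs_normal: "integrable (gauss_mat m n) (\<lambda>Z. \<bar>normalized_sum (idx m n) Z\<bar>)"
    "(\<integral>Z. \<bar>normalized_sum (idx m n) Z\<bar> \<partial>gauss_mat m n) \<le> 4"
    using integral_excess_normalized_sum_le[of "idx m n" "idx m n" 0] by (simp_all add: gauss_mat_def)
  have soft_integrable: "integrable (gauss_mat m n) (soft k)" for k
    using integral_dyadic_soft_max_le(1)[of m n "Suc k"] by (simp add: soft_def s_def)
  have soft_integral: "integral\<^sup>L (gauss_mat m n) (soft k) \<le> 2 * real K + 4" if "k < K" for k
    using integral_dyadic_soft_max_le(2)[of m n "Suc k"] that by (simp add: soft_def s_def)
  have "integral\<^sup>L (gauss_mat m n) F
      = t * (\<integral>Z. \<bar>normalized_sum (idx m n) Z\<bar> \<partial>gauss_mat m n)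
        + 4 * (2 * c + 1) * \<delta> * (\<Sum>k<K. integral\<^sup>L (gauss_mat m n) (soft k))"
    unfolding F_def using abs_normal(1) soft_integrable by (simp add: Bochner_Integration.integral_sum)
  also have "\<dots> \<le> t * 4 + 4 * (2 * c + 1) * \<delta> * (\<Sum>k<K. 2 * real K + 4)"
    using abs_normal(2) soft_integral assms(1,6,7)
    by (intro add_mono mult_left_mono sum_mono) auto
  finally have "integral\<^sup>L (gauss_mat m n) F \<le> 4 * t + 4 * (2 * c + 1) * \<delta> * (real K * (2 * real K + 4))"
    by simp
  moreover have "(\<lambda>_. 0) \<in> M_nbr m n \<delta> t"
    using assms(6,7) by (simp add: M_nbr_def is_matrix_def TV_def frob_def)
  moreover have "minner m n Z \<theta> \<le> F Z" if "\<theta> \<in> M_nbr m n \<delta> t" for Z \<theta>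
    using minner_le_chaining_bound[OF assms(1-5) that, of s Z] by (simp add: F_def soft_def s_def)
  moreover have "integrable (gauss_mat m n) F"
    unfolding F_def using abs_normal(1) soft_integrable by simp
  ultimately show ?thesis
    using assms(1,6,7) by (intro GW_le) auto
qed

lemma ln_ge_two_thirds: "2 \<le> n \<Longrightarrow> 2 / 3 \<le> ln (real n)"
  using ln2_ge_two_thirds ln_le_cancel_iff[of 2 "real n"] by (simp add: order_trans)

lemma dyadic_depth_le_ln:
  assumes "c \<ge> 1" "n \<ge> 2" "real m \<le> c * real n"
  obtains K where "m \<le> 2 ^ K" "n \<le> 2 ^ K" "real K \<le> (3 + 2 * log 2 c) * ln (real n)"
proof -
  define x where "x = real (max m n)"
  define K where "K = nat \<lceil>log 2 x\<rceil>"
  have x: "1 \<le> x" "x \<le> c * real n"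
    using assms mult_right_mono[of 1 c "real n"] by (auto simp: x_def of_nat_max)
  have K: "real K = of_int \<lceil>log 2 x\<rceil>"
    using x by (simp add: K_def)
  have "x = 2 powr (log 2 x)"
    using x by simp
  also have "\<dots> \<le> 2 powr real K"
    unfolding K by (intro powr_mono) auto
  finally have "real (max m n) \<le> 2 ^ K"
    by (simp add: x_def powr_realpow)
  then have "max m n \<le> 2 ^ K"
    by (metis of_nat_le_iff of_nat_numeral of_nat_power)
  have ln_n: "2 / 3 \<le> ln (real n)"
    using ln_ge_two_thirds[OF assms(2)] .
  have "real K < log 2 x + 1"
    unfolding K by linarith
  moreover have "log 2 x \<le> log 2 c + log 2 (real n)"
  proof -
    have "log 2 x \<le> log 2 (c * real n)"
      using x assms by (subst log_le_cancel_iff) auto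
    also have "\<dots> = log 2 c + log 2 (real n)"
      using assms by (simp add: log_mult)
    finally show ?thesis .
  qed
  moreover have "log 2 (real n) \<le> 3 / 2 * ln (real n)"
    using ln2_ge_two_thirds ln_n by (simp add: log_def divide_le_eq)
  moreover have "log 2 c \<le> 2 * log 2 c * ln (real n)"
    using ln_n assms(1) mult_left_mono[of 1 "2 * ln (real n)" "log 2 c"] by (simp add: mult.assoc)
  ultimately have "real K \<le> 3 * ln (real n) + 2 * log 2 c * ln (real n)"
    using ln_n by linarith
  then have "real K \<le> (3 + 2 * log 2 c) * ln (real n)"
    by (simp add: algebra_simps)
  with \<open>max m n \<le> 2 ^ K\<close> show ?thesis
    by (intro that) auto
qed

lemma GW_M_nbr_le_ln_squared:
  fixes c A :: real
  defines "A \<equiv> 3 + 2 * log 2 c"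
  assumes "c \<ge> 1" "n \<ge> 2" "real m \<le> c * real n" "real n \<le> c * real m" "\<delta> \<ge> 0" "t \<ge> 0"
  shows "GW m n (M_nbr m n \<delta> t) \<le> 4 * t + 4 * (2 * c + 1) * \<delta> * (A * (2 * A + 6) * (ln (real n))\<^sup>2)"
proof -
  obtain K where K: "m \<le> 2 ^ K" "n \<le> 2 ^ K" "real K \<le> A * ln (real n)"
    using dyadic_depth_le_ln[OF assms(2-4)] by (auto simp: A_def)
  have A: "A \<ge> 3" and ln_n: "2 / 3 \<le> ln (real n)"
    using assms(2,3) ln_ge_two_thirds by (simp_all add: A_def)
  then have "2 * real K + 4 \<le> (2 * A + 6) * ln (real n)"
    using K(3) by (simp add: algebra_simps)
  then have "real K * (2 * real K + 4) \<le> (A * ln (real n)) * ((2 * A + 6) * ln (real n))"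
    using A ln_n by (intro mult_mono[OF K(3)]) auto
  then have "real K * (2 * real K + 4) \<le> A * (2 * A + 6) * (ln (real n))\<^sup>2"
    by (simp add: power2_eq_square mult_ac)
  then have "4 * t + 4 * (2 * c + 1) * \<delta> * (real K * (2 * real K + 4))
      \<le> 4 * t + 4 * (2 * c + 1) * \<delta> * (A * (2 * A + 6) * (ln (real n))\<^sup>2)"
    using assms(2,6) by (intro add_left_mono mult_left_mono) auto
  with GW_M_nbr_le_dyadic_depth[OF assms(2,4,5) K(1,2) assms(6,7)] show ?thesis
    by linarith
qed

theorem lemma5p12:
  fixes c :: real
  assumes "c > 0"
  shows "\<exists>C::real. \<forall>(m::nat) (n::nat) (\<delta>::real) (t::real).
           \<delta> > 0 \<and> 0 < t \<and> t \<le> 1 \<and> m \<ge> 1 \<and> n \<ge> 2 \<and>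
           max (real m / real n) (real n / real m) \<le> c \<longrightarrow>
           GW m n (M_nbr m n \<delta> t) \<le> C * (\<delta> * (ln (real n))\<^sup>2 + t)"
proof -
  define c' where "c' = max c 1"
  define A where "A = 3 + 2 * log 2 c'"
  define C where "C = 4 + 4 * (2 * c' + 1) * (A * (2 * A + 6))"
  have c': "c' \<ge> 1" and A: "A \<ge> 3"
    by (simp_all add: c'_def A_def)
  have "GW m n (M_nbr m n \<delta> t) \<le> C * (\<delta> * (ln (real n))\<^sup>2 + t)"
    if "\<delta> > 0" "t > 0" "m \<ge> 1" "n \<ge> 2" "max (real m / real n) (real n / real m) \<le> c"
    for m n \<delta> t
  proof -
    have "real m / real n \<le> c'" "real n / real m \<le> c'"
      using that(5) by (auto simp: c'_def)
    then have "real m \<le> c' * real n" "real n \<le> c' * real m"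
      using that(3,4) by (simp_all add: divide_le_eq)
    from GW_M_nbr_le_ln_squared[OF c' that(4) this] that(1,2)
    have "GW m n (M_nbr m n \<delta> t) \<le> 4 * t + 4 * (2 * c' + 1) * \<delta> * (A * (2 * A + 6) * (ln (real n))\<^sup>2)"
      by (simp add: A_def)
    also have "\<dots> \<le> C * (\<delta> * (ln (real n))\<^sup>2 + t)"
      using c' A that(1,2) by (simp add: C_def algebra_simps)
    finally show ?thesis .
  qed
  then show ?thesis
    by blast
qed

end
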